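(* For every bracket pattern $w$, $A(w)=\bigcup_{w'\in\langle\!\langle w\rangle\!\rangle}w'$, and this set belongs to $\langle\!\langle w\rangle\!\rangle$.
   Context: $\mathbb N=\{1,2,\dots\}$, $\mathbb N_0=\mathbb N\cup\{0\}$. A bracket pattern is a non-empty finite subset $w\subseteq\mathbb N$; $\|w\|:=\max(w)$. For bracket patterns $w,w'$: superposition $w\cup w'$; for $j\in w$ the projection $\cap_j w:=\{i\in w\mid i\le j\}$; the dual $w^\dagger:=\{\|w\|-i\mid i\in\mathbb N_0,\ i<\|w\|,\ i\notin w\}$. A bracket pattern category is a set of bracket patterns closed under superposition, duals and projections; $\langle\!\langle w\rangle\!\rangle$ denotes the smallest bracket pattern category containing $w$. The completion of a bracket pattern $w$ is $A(w):=\{j-i\mid j\in w,\ i\in\mathbb N_0,\ i\notin w,\ i<j\}$. *)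

theory Defs
  imports Main
begin

definition bracket_pattern :: "nat set \<Rightarrow> bool" where
  "bracket_pattern w \<longleftrightarrow> w \<noteq> {} \<and> finite w \<and> 0 \<notin> w"

definition bnorm :: "nat set \<Rightarrow> nat" where
  "bnorm w = Max w"

definition proj :: "nat \<Rightarrow> nat set \<Rightarrow> nat set" where
  "proj j w = {i \<in> w. i \<le> j}"

definition bdual :: "nat set \<Rightarrow> nat set" where
  "bdual w = {bnorm w - i | i. i < bnorm w \<and> i \<notin> w}"

definition bp_category :: "nat set set \<Rightarrow> bool" where
  "bp_category C \<longleftrightarrow>
     (\<forall>w\<in>C. bracket_pattern w) \<and>
     (\<forall>w\<in>C. \<forall>w'\<in>C. w \<union> w' \<in> C) \<and>
     (\<forall>w\<in>C. bdual w \<in> C) \<and>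
     (\<forall>w\<in>C. \<forall>j\<in>w. proj j w \<in> C)"

definition generated :: "nat set \<Rightarrow> nat set set" where
  "generated w = \<Inter> {C. bp_category C \<and> w \<in> C}"

definition completion :: "nat set \<Rightarrow> nat set" where
  "completion w = {j - i | j i. j \<in> w \<and> i \<notin> w \<and> i < j}"

end

theory Submission
  imports Defs
begin

text \<open>The completion is the union, over \<open>j \<in> w\<close>, of the duals of the projections
  \<open>\<inter>\<^sub>j w\<close>; being a finite union of members of \<open>\<langle>\<langle>w\<rangle>\<rangle>\<close>, it lies in \<open>\<langle>\<langle>w\<rangle>\<rangle>\<close>.
  Conversely, \<open>v \<subseteq> A(v)\<close>, and superposition, projection and duality do not enlarge
  the completion, so the bracket patterns \<open>v\<close> with \<open>A(v) \<subseteq> A(w)\<close> form a category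
  containing \<open>w\<close>; hence every member of \<open>\<langle>\<langle>w\<rangle>\<rangle>\<close> is contained in \<open>A(w)\<close>.\<close>

lemma bnorm_in:
  assumes "bracket_pattern v"
  shows "bnorm v \<in> v"
  using assms unfolding bracket_pattern_def bnorm_def by simp

lemma in_bdual_iff: "m \<in> bdual v \<longleftrightarrow> 0 < m \<and> m \<le> bnorm v \<and> bnorm v - m \<notin> v"
proof
  assume "m \<in> bdual v"
  then show "0 < m \<and> m \<le> bnorm v \<and> bnorm v - m \<notin> v"
    unfolding bdual_def by auto
next
  assume "0 < m \<and> m \<le> bnorm v \<and> bnorm v - m \<notin> v"
  then have "bnorm v - m < bnorm v \<and> bnorm v - m \<notin> v \<and> m = bnorm v - (bnorm v - m)"
    by auto
  then show "m \<in> bdual v"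
    unfolding bdual_def by blast
qed

lemma bracket_pattern_bdual:
  assumes "bracket_pattern v"
  shows "bracket_pattern (bdual v)"
proof -
  have "bnorm v \<in> v" "0 \<notin> v"
    using assms bnorm_in unfolding bracket_pattern_def by auto
  then have "bnorm v \<in> bdual v"
    unfolding in_bdual_iff by (auto intro: gr0I)
  moreover have "bdual v \<subseteq> {..bnorm v}"
    using in_bdual_iff by auto
  moreover have "0 \<notin> bdual v"
    using in_bdual_iff by blast
  ultimately show ?thesis
    unfolding bracket_pattern_def using finite_subset by blast
qed

lemma bracket_pattern_proj:
  assumes "bracket_pattern v" "j \<in> v"
  shows "bracket_pattern (proj j v)"
  using assms unfolding bracket_pattern_def proj_def by auto

lemma bracket_pattern_Un:
  assumes "bracket_pattern v" "bracket_pattern u"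
  shows "bracket_pattern (v \<union> u)"
  using assms unfolding bracket_pattern_def by auto

lemma bp_category_bracket_patterns: "bp_category {v. bracket_pattern v}"
  unfolding bp_category_def
  using bracket_pattern_bdual bracket_pattern_proj bracket_pattern_Un by auto

lemma bp_category_Inter:
  assumes "F \<noteq> {}" "\<And>C. C \<in> F \<Longrightarrow> bp_category C"
  shows "bp_category (\<Inter>F)"
  using assms unfolding bp_category_def by (simp add: Inter_iff) blast

lemma bp_category_generated:
  assumes "bracket_pattern w"
  shows "bp_category (generated w)"
  unfolding generated_def
  using assms bp_category_bracket_patterns by (intro bp_category_Inter) auto

lemma generated_in: "w \<in> generated w"
  unfolding generated_def by blast

lemma generated_least: "bp_category C \<Longrightarrow> w \<in> C \<Longrightarrow> generated w \<subseteq> C"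
  unfolding generated_def by blast

lemma bp_category_Union:
  assumes "bp_category C" "finite S" "S \<noteq> {}" "S \<subseteq> C"
  shows "\<Union>S \<in> C"
  using assms(2-4)
proof (induction S rule: finite_ne_induct)
  case (singleton x)
  then show ?case by simp
next
  case (insert x F)
  then show ?case using assms(1) unfolding bp_category_def by simp
qed

lemma subset_completion:
  assumes "bracket_pattern v"
  shows "v \<subseteq> completion v"
proof
  fix j assume "j \<in> v"
  moreover have "0 \<notin> v" "0 < j"
    using assms \<open>j \<in> v\<close> unfolding bracket_pattern_def by (auto intro: gr0I)
  ultimately show "j \<in> completion v"
    unfolding completion_def by force
qed

lemma completion_Un_subset: "completion (v \<union> u) \<subseteq> completion v \<union> completion u"
  unfolding completion_def by blast

lemma completion_proj_subset: "completion (proj j v) \<subseteq> completion v"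
  unfolding completion_def proj_def by fastforce

lemma completion_bdual_subset:
  assumes "bracket_pattern v"
  shows "completion (bdual v) \<subseteq> completion v"
proof
  let ?n = "bnorm v"
  fix x assume "x \<in> completion (bdual v)"
  then obtain a m where a: "a \<in> bdual v" and m: "m \<notin> bdual v" "m < a" and x: "x = a - m"
    unfolding completion_def by blast
  from a have "a \<le> ?n" "?n - a \<notin> v"
    unfolding in_bdual_iff by auto
  moreover have "?n - m \<in> v"
    using m \<open>a \<le> ?n\<close> bnorm_in[OF assms] unfolding in_bdual_iff by (cases "m = 0") auto
  moreover have "?n - a < ?n - m" "x = (?n - m) - (?n - a)"
    using m x \<open>a \<le> ?n\<close> by auto
  ultimately show "x \<in> completion v"
    unfolding completion_def by blast
qed

lemma bp_category_completion_bounded: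
  "bp_category {v. bracket_pattern v \<and> completion v \<subseteq> completion w}" (is "bp_category ?C")
  unfolding bp_category_def
proof (intro conjI ballI)
  fix v u assume "v \<in> ?C" "u \<in> ?C"
  then show "v \<union> u \<in> ?C"
    using bracket_pattern_Un completion_Un_subset by blast
next
  fix v assume "v \<in> ?C"
  then show "bdual v \<in> ?C"
    using bracket_pattern_bdual completion_bdual_subset by blast
next
  fix v j assume "v \<in> ?C" "j \<in> v"
  then show "proj j v \<in> ?C"
    using bracket_pattern_proj completion_proj_subset by blast
qed simp

lemma bnorm_proj:
  assumes "finite v" "j \<in> v"
  shows "bnorm (proj j v) = j"
  unfolding bnorm_def proj_def using assms by (intro Max_eqI) auto

lemma completion_eq_UN_bdual_proj:
  assumes "bracket_pattern w"
  shows "completion w = (\<Union>j\<in>w. bdual (proj j w))"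
proof -
  have "bdual (proj j w) = {j - i | i. i < j \<and> i \<notin> w}" if "j \<in> w" for j
    using assms bnorm_proj[OF _ that] unfolding bracket_pattern_def bdual_def proj_def by auto
  then show ?thesis
    unfolding completion_def by blast
qed

theorem lemma7p8:
  assumes "bracket_pattern w"
  shows "completion w = \<Union> (generated w) \<and> completion w \<in> generated w"
proof -
  have cat: "bp_category (generated w)"
    using bp_category_generated[OF assms] .
  have "(\<lambda>j. bdual (proj j w)) ` w \<subseteq> generated w"
    using cat generated_in unfolding bp_category_def by blast
  then have mem: "completion w \<in> generated w"
    unfolding completion_eq_UN_bdual_proj[OF assms]
    using bp_category_Union[OF cat] assms unfolding bracket_pattern_def by simp
  have "generated w \<subseteq> {v. bracket_pattern v \<and> completion v \<subseteq> completion w}"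
    using assms by (intro generated_least[OF bp_category_completion_bounded]) auto
  then have "\<Union> (generated w) \<subseteq> completion w"
    using subset_completion by blast
  with mem show ?thesis by blast
qed

end
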